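(* Consider the discrete-time system $x_{k+1}=(I-\varepsilon\Delta)x_k+\varepsilon\pi A\psi(x_k)$, with $\pi>0$, each $\psi_i$ satisfying (A1)–(A4), and step size $0<\varepsilon<\frac{2}{\max_i\delta_i}$. Suppose the system admits a period-2 orbit: there is $K\ge0$ such that $x_{K+1}\neq x_K$ and $x_{k+2}=x_k$ for all $k\ge K$. Then $\pi>\pi_{1,d}$.
   Context: Let $\mathcal G$ be an undirected, connected signed graph on $n$ nodes without self-loops, with symmetric adjacency matrix $A=[a_{ij}]$ having zero diagonal and entries of either sign. Let $\delta_i=\sum_j|a_{ij}|>0$ and $\Delta=\mathrm{diag}(\delta_i)$. For $\pi>0$ let $L_\pi=\Delta-\pi A$. Define $\pi_{1,d}$ as the smallest $\pi>0$ at which the largest eigenvalue satisfies $\lambda_n(L_\pi)=2/\varepsilon$, equivalently the smallest eigenvalue of $J_\pi=I-\varepsilon L_\pi$ equals $-1$. Each $\psi_i:\mathbb R\to\mathbb R$ is smooth and satisfies: (A1) $\psi_i$ is odd; (A2) $\psi_i'>0$ everywhere and $\psi_i'(0)=1$; (A3) $\lim_{s\to\pm\infty}\psi_i(s)=\pm1$; (A4) $\psi_i$ is strictly convex for $s<0$ and strictly concave for $s>0$. Here $\psi(x)=(\psi_i(x_i))_i$. *)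

theory Defs
  imports "HOL-Analysis.Analysis"
begin

definition smooth_fun :: "(real \<Rightarrow> real) \<Rightarrow> bool" where
  "smooth_fun f \<longleftrightarrow> (\<forall>k x. ((deriv ^^ k) f) differentiable (at x))"

definition strict_convex_on :: "real set \<Rightarrow> (real \<Rightarrow> real) \<Rightarrow> bool" where
  "strict_convex_on S f \<longleftrightarrow> convex S \<and>
     (\<forall>x\<in>S. \<forall>y\<in>S. \<forall>u::real. x \<noteq> y \<and> 0 < u \<and> u < 1 \<longrightarrow>
        f ((1 - u) * x + u * y) < (1 - u) * f x + u * f y)"

definition strict_concave_on :: "real set \<Rightarrow> (real \<Rightarrow> real) \<Rightarrow> bool" where
  "strict_concave_on S f \<longleftrightarrow> strict_convex_on S (\<lambda>x. - f x)"

definition admissible_psi :: "(real \<Rightarrow> real) \<Rightarrow> bool" where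
  "admissible_psi f \<longleftrightarrow> smooth_fun f
     \<and> (\<forall>s. f (- s) = - f s)
     \<and> (\<forall>s. deriv f s > 0) \<and> deriv f 0 = 1
     \<and> (f \<longlongrightarrow> 1) at_top \<and> (f \<longlongrightarrow> -1) at_bot
     \<and> strict_convex_on {..<0} f \<and> strict_concave_on {0<..} f"

definition connected_signed_graph :: "real^'n^'n \<Rightarrow> bool" where
  "connected_signed_graph A \<longleftrightarrow>
     (\<forall>i j. A $ i $ j = A $ j $ i) \<and> (\<forall>i. A $ i $ i = 0)
     \<and> (\<forall>i j. (i, j) \<in> {(p, q). A $ p $ q \<noteq> 0}\<^sup>*)"

definition sdegree :: "real^'n^'n \<Rightarrow> 'n::finite \<Rightarrow> real" where
  "sdegree A i = (\<Sum>j\<in>UNIV. \<bar>A $ i $ j\<bar>)"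

definition Delta_mat :: "real^'n^'n \<Rightarrow> real^'n^'n" where
  "Delta_mat A = (\<chi> i j. if i = j then sdegree A i else 0)"

definition L_pi :: "real^'n^'n \<Rightarrow> real \<Rightarrow> real^'n^'n" where
  "L_pi A p = Delta_mat A - p *\<^sub>R A"

definition eigenvalues :: "real^'n^'n \<Rightarrow> real set" where
  "eigenvalues M = {l. \<exists>v. v \<noteq> 0 \<and> M *v v = l *\<^sub>R v}"

text \<open>Largest eigenvalue lambda_n (for symmetric matrices the set of eigenvalues is finite and nonempty).\<close>
definition lambda_max :: "real^'n^'n \<Rightarrow> real" where
  "lambda_max M = Max (eigenvalues M)"

definition pi_1d :: "real^'n^'n \<Rightarrow> real \<Rightarrow> real" where
  "pi_1d A eps = Inf {p. p > 0 \<and> lambda_max (L_pi A p) = 2 / eps}"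

end

theory Submission
  imports Defs
begin

text \<open>Subtracting the two steps of the 2-cycle \<open>a \<mapsto> b \<mapsto> a\<close> gives, with \<open>d = a - b\<close> and
  \<open>w = \<psi>(a) - \<psi>(b)\<close>, the identity \<open>\<pi> (A w)\<^sub>i = (\<delta>\<^sub>i - 2/\<epsilon>) d\<^sub>i\<close>. Each \<open>\<psi>\<^sub>i\<close> is strictly
  increasing with slope strictly below 1 away from 0, so \<open>w\<^sub>i (d\<^sub>i - w\<^sub>i) \<ge> 0\<close>, with strict
  inequality where \<open>d\<^sub>i \<noteq> 0\<close>; as \<open>\<delta>\<^sub>i < 2/\<epsilon>\<close>, this makes
  \<open>w\<^sup>T L\<^sub>\<pi> w - (2/\<epsilon>) |w|\<^sup>2 = \<Sum>\<^sub>i (2/\<epsilon> - \<delta>\<^sub>i) w\<^sub>i (d\<^sub>i - w\<^sub>i)\<close> positive, hence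
  \<open>\<lambda>\<^sub>n(L\<^sub>\<pi>) > 2/\<epsilon>\<close>. On the other hand \<open>\<lambda>\<^sub>n(L\<^sub>0) = max \<delta>\<^sub>i < 2/\<epsilon>\<close>. By the Rayleigh
  principle \<open>q \<mapsto> \<lambda>\<^sub>n(L\<^sub>q)\<close> is a supremum of affine functions, hence convex and continuous,
  and the intermediate value theorem gives \<open>q \<in> (0, \<pi>)\<close> with \<open>\<lambda>\<^sub>n(L\<^sub>q) = 2/\<epsilon>\<close>.\<close>

lemma strict_convex_onD:
  assumes "strict_convex_on S f" "x \<in> S" "y \<in> S" "x \<noteq> y" "0 < u" "u < 1"
  shows "f ((1 - u) * x + u * y) < (1 - u) * f x + u * f y"
  using assms unfolding strict_convex_on_def by blast

lemma strict_convex_on_imp_convex_on: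
  assumes "strict_convex_on S f"
  shows "convex_on S f"
proof
  show "convex S"
    using assms unfolding strict_convex_on_def by simp
next
  fix t x y :: real assume "0 < t" "t < 1" "x \<in> S" "y \<in> S"
  then show "f ((1 - t) *\<^sub>R x + t *\<^sub>R y) \<le> (1 - t) * f x + t * f y"
    using strict_convex_onD[OF assms, of x y t]
    by (cases "x = y") (auto simp: algebra_simps)
qed

lemma strict_convex_on_derivative_strict_mono:
  fixes f f' :: "real \<Rightarrow> real"
  assumes conv: "strict_convex_on S f" and "open S"
    and deriv: "\<And>z. z \<in> S \<Longrightarrow> (f has_real_derivative f' z) (at z)"
    and S: "x \<in> S" "y \<in> S" and "x < y"
  shows "f' x < f' y"
proof -
  define m where "m = x / 2 + y / 2"
  have "convex S"
    using conv unfolding strict_convex_on_def by simp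
  have m: "m \<in> S"
    using convexD[OF \<open>convex S\<close> S, of "1/2" "1/2"] by (simp add: m_def field_simps)
  have tangent: "f' c * (z - c) \<le> f z - f c" if "c \<in> S" "z \<in> S" for c z
    by (rule convex_on_imp_above_tangent[OF strict_convex_on_imp_convex_on[OF conv]
          convex_connected[OF \<open>convex S\<close>]])
       (use that \<open>open S\<close> deriv in \<open>auto simp: interior_open intro: has_field_derivative_at_within\<close>)
  have "f m < (f x + f y) / 2"
    using strict_convex_onD[OF conv S, of "1/2"] \<open>x < y\<close> by (simp add: m_def)
  then have "f' x * (m - x) < f' y * (y - m)"
    using tangent[OF S(1) m] tangent[OF S(2) m] by (simp add: right_diff_distrib)
  moreover have "m - x = y - m" "0 < y - m"
    using \<open>x < y\<close> by (auto simp: m_def field_simps)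
  ultimately show ?thesis
    by simp
qed

lemma admissible_psi_has_derivative:
  assumes "admissible_psi f"
  shows "(f has_real_derivative deriv f s) (at s)"
proof -
  have "((deriv ^^ 0) f) differentiable (at s)"
    using assms unfolding admissible_psi_def smooth_fun_def by blast
  then show ?thesis
    by (simp add: DERIV_deriv_iff_real_differentiable)
qed

lemma admissible_psi_isCont_deriv:
  assumes "admissible_psi f"
  shows "isCont (deriv f) s"
proof -
  have "((deriv ^^ 1) f) differentiable (at s)"
    using assms unfolding admissible_psi_def smooth_fun_def by blast
  then show ?thesis
    by (simp add: differentiable_imp_continuous_within)
qed

lemma admissible_psi_strict_mono:
  assumes "admissible_psi f" "u < v"
  shows "f u < f v"
  using DERIV_pos_imp_increasing[OF assms(2)] admissible_psi_has_derivative[OF assms(1)] assms(1)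
  unfolding admissible_psi_def by blast

lemma admissible_psi_deriv_less_one:
  assumes psi: "admissible_psi f" and "s \<noteq> 0"
  shows "deriv f s < 1"
proof -
  \<comment> \<open>\<open>f'\<close> increases strictly on \<open>(-\<infinity>, 0)\<close>, decreases strictly on \<open>(0, \<infinity>)\<close>,
     and is continuous at 0 with \<open>f' 0 = 1\<close>.\<close>
  have D: "(f has_real_derivative deriv f z) (at z)" for z
    by (rule admissible_psi_has_derivative[OF psi])
  have lim: "(deriv f \<longlongrightarrow> 1) (at 0 within S)" for S
    using admissible_psi_isCont_deriv[OF psi, of 0] psi
    by (auto simp: isCont_def admissible_psi_def intro: tendsto_mono[OF at_within_le_at])
  show ?thesis
  proof (cases "s < 0")
    case True
    have mono: "deriv f a < deriv f b" if "a < b" "b < 0" for a b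
      using strict_convex_on_derivative_strict_mono[of "{..<0}" f "deriv f"] psi D that
      by (simp add: admissible_psi_def)
    have "deriv f (s/2) \<le> 1"
      by (rule tendsto_lowerbound[OF lim[of "{..<0}"]])
         (use True in \<open>auto intro!: eventually_at_leftI[of "s/2"] less_imp_le mono\<close>)
    then show ?thesis
      using mono[of s "s/2"] True by simp
  next
    case False
    with \<open>s \<noteq> 0\<close> have "0 < s" by simp
    have mono: "deriv f b < deriv f a" if "0 < a" "a < b" for a b
      using strict_convex_on_derivative_strict_mono[of "{0<..}" "\<lambda>x. - f x" "\<lambda>x. - deriv f x"]
        psi D that
      by (simp add: admissible_psi_def strict_concave_on_def DERIV_minus)
    have "deriv f (s/2) \<le> 1"
      by (rule tendsto_lowerbound[OF lim[of "{0<..}"]])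
         (use \<open>0 < s\<close> in \<open>auto intro!: eventually_at_rightI[of 0 "s/2"] less_imp_le mono\<close>)
    then show ?thesis
      using mono[of "s/2" s] \<open>0 < s\<close> by simp
  qed
qed

lemma admissible_psi_increment_less:
  assumes psi: "admissible_psi f" and "u < v"
  shows "f v - f u < v - u"
proof -
  define h where "h x = x - f x" for x
  have h_deriv: "(h has_real_derivative 1 - deriv f x) (at x)" for x
    unfolding h_def[abs_def] by (intro derivative_intros admissible_psi_has_derivative[OF psi])
  have h_less: "h a < h b" if "a < b" "0 \<notin> {a<..<b}" for a b
  proof (rule DERIV_pos_imp_increasing_open[OF \<open>a < b\<close>])
    fix z assume "a < z" "z < b"
    then have "z \<noteq> 0"
      using that(2) by auto
    then show "\<exists>y. (h has_real_derivative y) (at z) \<and> 0 < y"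
      using h_deriv admissible_psi_deriv_less_one[OF psi] by fastforce
  next
    show "continuous_on {a..b} h"
      using h_deriv by (meson DERIV_continuous continuous_at_imp_continuous_on)
  qed
  have "h u < h v"
  proof (cases "0 \<in> {u<..<v}")
    case True
    then show ?thesis
      using h_less[of u 0] h_less[of 0 v] by fastforce
  next
    case False
    then show ?thesis
      using h_less \<open>u < v\<close> by blast
  qed
  then show ?thesis
    by (simp add: h_def)
qed

lemma admissible_psi_secant_pos:
  assumes psi: "admissible_psi f" and "s \<noteq> t"
  shows "0 < (f s - f t) * ((s - t) - (f s - f t))"
proof -
  have *: "0 < (f v - f u) * ((v - u) - (f v - f u))" if "u < v" for u v
    using admissible_psi_strict_mono[OF psi that] admissible_psi_increment_less[OF psi that]
    by simp
  show ?thesis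
  proof (cases "t < s")
    case True
    then show ?thesis using * by blast
  next
    case False
    with \<open>s \<noteq> t\<close> have "s < t" by simp
    then show ?thesis
      using *[of s t] by (simp add: algebra_simps)
  qed
qed

lemma inner_matrix_vector_symmetric:
  fixes M :: "real^'n^'n"
  assumes "transpose M = M"
  shows "u \<bullet> (M *v v) = (M *v u) \<bullet> v"
  by (metis assms dot_lmul_matrix vector_transpose_matrix)

definition rayleigh_max :: "real^'n^'n \<Rightarrow> real" where
  "rayleigh_max M = Sup ((\<lambda>v. v \<bullet> (M *v v)) ` sphere 0 1)"

lemma rayleigh_max_attained:
  fixes M :: "real^'n^'n"
  obtains u where "u \<in> sphere 0 1" "rayleigh_max M = u \<bullet> (M *v u)"
    "\<And>v. v \<in> sphere 0 1 \<Longrightarrow> v \<bullet> (M *v v) \<le> rayleigh_max M"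
proof -
  have "continuous_on (sphere 0 1) (\<lambda>v::real^'n. v \<bullet> (M *v v))"
    by (intro continuous_intros linear_continuous_on matrix_vector_mul_linear)
  moreover have "sphere (0::real^'n) 1 \<noteq> {}"
    by simp
  ultimately obtain u where u: "u \<in> sphere 0 1"
    "\<And>v. v \<in> sphere 0 1 \<Longrightarrow> v \<bullet> (M *v v) \<le> u \<bullet> (M *v u)"
    using continuous_attains_sup[OF compact_sphere] by blast
  moreover have "rayleigh_max M = u \<bullet> (M *v u)"
    unfolding rayleigh_max_def by (rule cSup_eq_maximum) (use u in auto)
  ultimately show ?thesis
    using that by auto
qed

lemma quadratic_form_le_rayleigh_max:
  fixes M :: "real^'n^'n"
  shows "z \<bullet> (M *v z) \<le> rayleigh_max M * (z \<bullet> z)"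
proof (cases "z = 0")
  case False
  have "v \<bullet> (M *v v) \<le> rayleigh_max M" if "v \<in> sphere 0 1" for v
    using that by (metis rayleigh_max_attained)
  from this[of "z /\<^sub>R norm z"] False
  have "z \<bullet> (M *v z) / (norm z)\<^sup>2 \<le> rayleigh_max M"
    by (simp add: matrix_vector_mult_scaleR power2_eq_square field_simps)
  then show ?thesis
    using False by (simp add: power2_norm_eq_inner divide_le_eq)
qed simp

lemma rayleigh_max_le:
  fixes M :: "real^'n^'n"
  assumes "\<And>v. v \<in> sphere 0 1 \<Longrightarrow> v \<bullet> (M *v v) \<le> c"
  shows "rayleigh_max M \<le> c"
  by (metis assms rayleigh_max_attained)

lemma eigenvalue_le_rayleigh_max:
  assumes "l \<in> eigenvalues M"
  shows "l \<le> rayleigh_max M"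
proof -
  obtain v where v: "v \<noteq> 0" "M *v v = l *\<^sub>R v"
    using assms unfolding eigenvalues_def by blast
  then have "l * (v \<bullet> v) \<le> rayleigh_max M * (v \<bullet> v)"
    using quadratic_form_le_rayleigh_max[of v M] by simp
  then show ?thesis
    using v(1) by simp
qed

lemma psd_quadratic_form_eq_0_imp_kernel:
  fixes N :: "real^'n^'n"
  assumes sym: "transpose N = N" and psd: "\<And>z. 0 \<le> z \<bullet> (N *v z)"
    and "u \<bullet> (N *v u) = 0"
  shows "N *v u = 0"
proof (rule ccontr)
  \<comment> \<open>Moving from \<open>u\<close> along \<open>-N u\<close> makes the form negative to first order.\<close>
  define r where "r = N *v u"
  define a where "a = r \<bullet> r"
  define c where "c = r \<bullet> (N *v r)"
  define t where "t = a / (c + 1)"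
  assume "N *v u \<noteq> 0"
  then have "0 < a"
    by (simp add: a_def r_def)
  moreover have "0 \<le> c"
    using psd by (simp add: c_def)
  ultimately have "0 < t" "t * c < a"
    by (auto simp: t_def field_simps)
  have "u \<bullet> r = 0"
    using assms(3) by (simp add: r_def)
  moreover have "u \<bullet> (N *v r) = a"
    using inner_matrix_vector_symmetric[OF sym, of u r] by (simp add: a_def r_def)
  moreover have "N *v (u - t *\<^sub>R r) = r - t *\<^sub>R (N *v r)"
    by (simp add: r_def matrix_vector_mult_diff_distrib matrix_vector_mult_scaleR)
  ultimately have "(u - t *\<^sub>R r) \<bullet> (N *v (u - t *\<^sub>R r)) = t * (t * c - 2 * a)"
    by (simp add: a_def c_def algebra_simps)
  also have "\<dots> < 0"
    using \<open>0 < t\<close> \<open>t * c < a\<close> \<open>0 < a\<close> by (simp add: mult_pos_neg)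
  finally show False
    using psd not_le by blast
qed

lemma rayleigh_max_in_eigenvalues:
  fixes M :: "real^'n^'n"
  assumes sym: "transpose M = M"
  shows "rayleigh_max M \<in> eigenvalues M"
proof -
  define g where "g = rayleigh_max M"
  define N where "N = g *\<^sub>R mat 1 - M"
  have N_quad: "z \<bullet> (N *v z) = g * (z \<bullet> z) - z \<bullet> (M *v z)" for z
    by (simp add: N_def matrix_vector_mult_diff_rdistrib scaleR_matrix_vector_assoc[symmetric]
        inner_diff_right)
  obtain u where u: "u \<in> sphere 0 1" "g = u \<bullet> (M *v u)"
    using rayleigh_max_attained unfolding g_def by blast
  have "N *v u = 0"
  proof (rule psd_quadratic_form_eq_0_imp_kernel)
    show "transpose N = N"
      using sym by (simp add: N_def transpose_def vec_eq_iff mat_def)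
    show "0 \<le> z \<bullet> (N *v z)" for z
      using quadratic_form_le_rayleigh_max[of z M] by (simp add: N_quad g_def)
    show "u \<bullet> (N *v u) = 0"
      using u by (simp add: N_quad dot_square_norm)
  qed
  then have "M *v u = g *\<^sub>R u"
    by (simp add: N_def matrix_vector_mult_diff_rdistrib scaleR_matrix_vector_assoc[symmetric])
  moreover have "u \<noteq> 0"
    using u by auto
  ultimately show ?thesis
    unfolding eigenvalues_def g_def by blast
qed

lemma finite_eigenvalues:
  fixes M :: "real^'n^'n"
  assumes sym: "transpose M = M"
  shows "finite (eigenvalues M)"
proof -
  define ev where "ev l = (SOME v. v \<noteq> 0 \<and> M *v v = l *\<^sub>R v)" for l
  have ev: "ev l \<noteq> 0" "M *v ev l = l *\<^sub>R ev l" if "l \<in> eigenvalues M" for l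
    using someI_ex[of "\<lambda>v. v \<noteq> 0 \<and> M *v v = l *\<^sub>R v"] that
    unfolding ev_def eigenvalues_def by auto
  have orth: "ev l \<bullet> ev l' = 0"
    if "l \<in> eigenvalues M" "l' \<in> eigenvalues M" "l \<noteq> l'" for l l'
  proof -
    have "l' * (ev l \<bullet> ev l') = l * (ev l \<bullet> ev l')"
      using inner_matrix_vector_symmetric[OF sym, of "ev l" "ev l'"] ev[OF that(1)] ev[OF that(2)]
      by simp
    then show ?thesis
      using that(3) by auto
  qed
  have "inj_on ev (eigenvalues M)"
    by (rule inj_onI) (metis ev(1) inner_eq_zero_iff orth)
  moreover have "pairwise orthogonal (ev ` eigenvalues M)"
    using orth by (fastforce simp: pairwise_def orthogonal_def)
  then have "independent (ev ` eigenvalues M)"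
    by (rule pairwise_orthogonal_independent) (use ev(1) in auto)
  ultimately show ?thesis
    using finiteI_independent finite_imageD by blast
qed

lemma lambda_max_eq_rayleigh_max:
  fixes M :: "real^'n^'n"
  assumes "transpose M = M"
  shows "lambda_max M = rayleigh_max M"
  unfolding lambda_max_def
  by (rule Max_eqI[OF finite_eigenvalues[OF assms] eigenvalue_le_rayleigh_max
        rayleigh_max_in_eigenvalues[OF assms]])

lemma convex_on_rayleigh_max_pencil:
  fixes M N :: "real^'n^'n"
  shows "convex_on UNIV (\<lambda>t. rayleigh_max (M - t *\<^sub>R N))"
proof (rule convex_onI)
  fix u s t :: real assume "0 < u" "u < 1"
  have quad: "v \<bullet> ((M - t *\<^sub>R N) *v v) = v \<bullet> (M *v v) - t * (v \<bullet> (N *v v))" for v t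
    by (simp add: matrix_vector_mult_diff_rdistrib scaleR_matrix_vector_assoc[symmetric]
        inner_diff_right)
  show "rayleigh_max (M - ((1 - u) *\<^sub>R s + u *\<^sub>R t) *\<^sub>R N)
      \<le> (1 - u) * rayleigh_max (M - s *\<^sub>R N) + u * rayleigh_max (M - t *\<^sub>R N)"
  proof (rule rayleigh_max_le)
    fix v :: "real^'n" assume "v \<in> sphere 0 1"
    then have "v \<bullet> v = 1"
      by (simp add: dot_square_norm)
    then have "v \<bullet> ((M - s *\<^sub>R N) *v v) \<le> rayleigh_max (M - s *\<^sub>R N)"
      "v \<bullet> ((M - t *\<^sub>R N) *v v) \<le> rayleigh_max (M - t *\<^sub>R N)"
      using quadratic_form_le_rayleigh_max by (metis mult.right_neutral)+
    then have "(1 - u) * (v \<bullet> ((M - s *\<^sub>R N) *v v)) + u * (v \<bullet> ((M - t *\<^sub>R N) *v v))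
        \<le> (1 - u) * rayleigh_max (M - s *\<^sub>R N) + u * rayleigh_max (M - t *\<^sub>R N)"
      using \<open>0 < u\<close> \<open>u < 1\<close> by (intro add_mono mult_left_mono) auto
    moreover have "v \<bullet> ((M - ((1 - u) *\<^sub>R s + u *\<^sub>R t) *\<^sub>R N) *v v)
        = (1 - u) * (v \<bullet> ((M - s *\<^sub>R N) *v v)) + u * (v \<bullet> ((M - t *\<^sub>R N) *v v))"
      unfolding quad by (simp add: algebra_simps)
    ultimately show "v \<bullet> ((M - ((1 - u) *\<^sub>R s + u *\<^sub>R t) *\<^sub>R N) *v v)
        \<le> (1 - u) * rayleigh_max (M - s *\<^sub>R N) + u * rayleigh_max (M - t *\<^sub>R N)"
      by simp
  qed
qed simp

lemma Delta_mat_mult_component: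
  "(Delta_mat A *v v) $ i = sdegree A i * v $ i"
proof -
  have "(\<Sum>j\<in>UNIV. (if i = j then sdegree A i else 0) * v $ j)
      = (\<Sum>j\<in>UNIV. if i = j then sdegree A i * v $ j else 0)"
    by (rule sum.cong) auto
  then show ?thesis
    by (simp add: Delta_mat_def matrix_vector_mult_def)
qed

lemma L_pi_mult_component:
  "(L_pi A p *v v) $ i = sdegree A i * v $ i - p * (A *v v) $ i"
  by (simp add: L_pi_def matrix_vector_mult_diff_rdistrib scaleR_matrix_vector_assoc[symmetric]
      Delta_mat_mult_component)

lemma transpose_L_pi:
  assumes "transpose A = A"
  shows "transpose (L_pi A p) = L_pi A p"
  using assms by (simp add: L_pi_def Delta_mat_def transpose_def vec_eq_iff)

lemma rayleigh_max_L_pi_0_le: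
  fixes A :: "real^'n^'n"
  shows "rayleigh_max (L_pi A 0) \<le> Max (range (sdegree A))"
proof (rule rayleigh_max_le)
  fix v :: "real^'n" assume "v \<in> sphere 0 1"
  then have "v \<bullet> v = 1"
    by (simp add: dot_square_norm)
  then have unit: "(\<Sum>i\<in>UNIV. (v $ i)\<^sup>2) = 1"
    by (simp add: inner_vec_def power2_eq_square)
  have "v \<bullet> (L_pi A 0 *v v) = (\<Sum>i\<in>UNIV. sdegree A i * (v $ i)\<^sup>2)"
    by (simp add: inner_vec_def L_pi_mult_component power2_eq_square mult_ac)
  also have "\<dots> \<le> (\<Sum>i\<in>UNIV. Max (range (sdegree A)) * (v $ i)\<^sup>2)"
    by (intro sum_mono mult_right_mono) auto
  also have "\<dots> = Max (range (sdegree A))"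
    using unit by (simp add: sum_distrib_left[symmetric])
  finally show "v \<bullet> (L_pi A 0 *v v) \<le> Max (range (sdegree A))" .
qed

lemma pi_1d_less:
  fixes A :: "real^'n^'n"
  assumes sym: "transpose A = A" and "0 < p"
    and below: "rayleigh_max (L_pi A 0) < 2 / eps"
    and above: "2 / eps < rayleigh_max (L_pi A p)"
  shows "pi_1d A eps < p"
proof -
  have "continuous_on UNIV (\<lambda>q. rayleigh_max (L_pi A q))"
    using convex_on_continuous[OF open_UNIV convex_on_rayleigh_max_pencil[of "Delta_mat A" A]]
    by (simp add: L_pi_def)
  then obtain q where q: "0 \<le> q" "q \<le> p" "rayleigh_max (L_pi A q) = 2 / eps"
    using IVT'[of "\<lambda>q. rayleigh_max (L_pi A q)" 0 "2 / eps" p] below above \<open>0 < p\<close>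
    by (force intro: continuous_on_subset)
  then have "0 < q" "q < p"
    using below above by (auto simp: order_le_less)
  moreover have "lambda_max (L_pi A q) = 2 / eps"
    using lambda_max_eq_rayleigh_max[OF transpose_L_pi[OF sym]] q(3) by simp
  ultimately have "pi_1d A eps \<le> q"
    unfolding pi_1d_def by (intro cInf_lower) (auto intro: bdd_belowI[where m = 0])
  then show ?thesis
    using \<open>q < p\<close> by simp
qed

lemma two_cycle_coupling:
  assumes ab: "b = a - eps *\<^sub>R (Delta_mat A *v a) + (eps * p) *\<^sub>R (A *v u)"
    and ba: "a = b - eps *\<^sub>R (Delta_mat A *v b) + (eps * p) *\<^sub>R (A *v v)"
    and "eps \<noteq> 0"
  shows "p * (A *v (u - v)) $ i = (sdegree A i - 2 / eps) * (a - b) $ i"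
proof -
  have "b $ i = a $ i - eps * sdegree A i * a $ i + eps * p * (A *v u) $ i"
    "a $ i = b $ i - eps * sdegree A i * b $ i + eps * p * (A *v v) $ i"
    using arg_cong[OF ab, of "\<lambda>z. z $ i"] arg_cong[OF ba, of "\<lambda>z. z $ i"]
    by (simp_all add: Delta_mat_mult_component mult.assoc)
  then have "eps * (p * (A *v (u - v)) $ i) = eps * sdegree A i * (a - b) $ i - 2 * (a - b) $ i"
    by (simp (no_asm) add: matrix_vector_mult_diff_distrib right_diff_distrib mult.assoc)
  then show ?thesis
    using \<open>eps \<noteq> 0\<close> by (simp add: field_simps)
qed

lemma L_pi_quadratic_excess:
  assumes "\<And>i. p * (A *v w) $ i = (sdegree A i - c) * d $ i"
  shows "w \<bullet> (L_pi A p *v w) - c * (w \<bullet> w)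
    = (\<Sum>i\<in>UNIV. (c - sdegree A i) * (w $ i * (d $ i - w $ i)))"
  unfolding inner_vec_def sum_distrib_left sum_subtractf[symmetric]
  by (rule sum.cong) (simp_all add: L_pi_mult_component assms algebra_simps)

lemma two_cycle_rayleigh_max_gt:
  fixes A :: "real^'n^'n" and psi :: "'n \<Rightarrow> real \<Rightarrow> real"
  assumes psi: "\<And>i. admissible_psi (psi i)"
    and deg: "\<And>i. sdegree A i < 2 / eps" and "0 < eps"
    and ab: "b = a - eps *\<^sub>R (Delta_mat A *v a) + (eps * p) *\<^sub>R (A *v (\<chi> i. psi i (a $ i)))"
    and ba: "a = b - eps *\<^sub>R (Delta_mat A *v b) + (eps * p) *\<^sub>R (A *v (\<chi> i. psi i (b $ i)))"
    and "a \<noteq> b"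
  shows "2 / eps < rayleigh_max (L_pi A p)"
proof -
  define d where "d = a - b"
  define w :: "real^'n" where "w = (\<chi> i. psi i (a $ i)) - (\<chi> i. psi i (b $ i))"
  have secant: "w $ i * (d $ i - w $ i) = (psi i (a $ i) - psi i (b $ i))
      * ((a $ i - b $ i) - (psi i (a $ i) - psi i (b $ i)))" for i
    by (simp add: d_def w_def)
  obtain i0 where "a $ i0 \<noteq> b $ i0"
    using \<open>a \<noteq> b\<close> by (auto simp: vec_eq_iff)
  have "0 < (\<Sum>i\<in>UNIV. (2 / eps - sdegree A i) * (w $ i * (d $ i - w $ i)))"
  proof (rule sum_pos2[of UNIV i0])
    show "0 < (2 / eps - sdegree A i0) * (w $ i0 * (d $ i0 - w $ i0))"
      using admissible_psi_secant_pos[OF psi \<open>a $ i0 \<noteq> b $ i0\<close>] deg[of i0]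
      by (simp add: secant)
    show "0 \<le> (2 / eps - sdegree A i) * (w $ i * (d $ i - w $ i))" for i
      using admissible_psi_secant_pos[OF psi, of "a $ i" "b $ i" i] deg[of i]
      by (cases "a $ i = b $ i") (simp_all add: secant less_imp_le d_def w_def)
  qed simp_all
  also have "\<dots> = w \<bullet> (L_pi A p *v w) - 2 / eps * (w \<bullet> w)"
    using two_cycle_coupling[OF ab ba] \<open>0 < eps\<close> unfolding d_def w_def
    by (intro L_pi_quadratic_excess[symmetric]) simp
  also have "\<dots> \<le> (rayleigh_max (L_pi A p) - 2 / eps) * (w \<bullet> w)"
    using quadratic_form_le_rayleigh_max[of w "L_pi A p"] by (simp add: left_diff_distrib)
  finally show ?thesis
    using inner_ge_zero[of w] by (auto simp: zero_less_mult_iff)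
qed

theorem lemma4:
  fixes A :: "real^'n^'n" and psi :: "'n \<Rightarrow> real \<Rightarrow> real"
    and x :: "nat \<Rightarrow> real^'n" and p eps :: real and K :: nat
  assumes graph: "connected_signed_graph A"
    and deg_pos: "\<forall>i. sdegree A i > 0"
    and psi: "\<forall>i. admissible_psi (psi i)"
    and p_pos: "p > 0"
    and eps_pos: "0 < eps"
    and eps_bound: "eps < 2 / Max (range (sdegree A))"
    and dyn: "\<forall>k. x (Suc k) = x k - eps *\<^sub>R (Delta_mat A *v x k)
                 + (eps * p) *\<^sub>R (A *v (\<chi> i. psi i (x k $ i)))"
    and orbit: "x (Suc K) \<noteq> x K" "\<forall>k\<ge>K. x (k + 2) = x k"
  shows "p > pi_1d A eps"
proof (rule pi_1d_less)
  show "transpose A = A"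
    using graph by (simp add: connected_signed_graph_def transpose_def vec_eq_iff)
  have max_deg: "sdegree A i \<le> Max (range (sdegree A))" for i
    by (simp add: Max_ge)
  then have "0 < Max (range (sdegree A))"
    using deg_pos less_le_trans by blast
  then have max_lt: "Max (range (sdegree A)) < 2 / eps"
    using eps_bound eps_pos by (simp add: field_simps)
  then show "rayleigh_max (L_pi A 0) < 2 / eps"
    using rayleigh_max_L_pi_0_le[of A] by linarith
  have "x (Suc (Suc K)) = x K"
    using orbit(2) by (metis add_2_eq_Suc' order_refl)
  then show "2 / eps < rayleigh_max (L_pi A p)"
    using two_cycle_rayleigh_max_gt[of psi A eps "x (Suc K)" "x K" p] psi eps_pos dyn orbit(1)
      max_deg max_lt by (metis le_less_trans)
qed (rule p_pos)

end
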